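(* Let $G$ be a maximal outerplanar graph and $\widetilde{G}$ its reduced graph. If $\widetilde{G}$ contains $M_1$ as an induced subgraph, or contains $M_1^{\ell}$ as an induced subgraph for some $\ell\ge 0$, then $G$ is not in $B_1$.
   Context: A graph is maximal outerplanar if it is outerplanar and adding any single new edge yields a non-outerplanar graph. $S_3$ is the graph with vertices $x_1,x_2,x_3,y_1,y_2,y_3$ and edges $\{x_1,x_2\},\{x_1,x_3\},\{x_2,x_3\},\{x_1,y_1\},\{x_2,y_1\},\{x_2,y_2\},\{x_3,y_2\},\{x_3,y_3\},\{x_1,y_3\}$; its central vertices are $x_1,x_2,x_3$ and central edges are the three edges among them. The reduced graph $\widetilde{G}$ is obtained by coloring, for every induced subgraph of $G$ isomorphic to $S_3$, its central vertices and central edges, and then deleting all uncolored vertices and edges. $M_1$ is the graph on $d_1,\dots,d_5$ with edges $d_1d_2,d_1d_3,d_2d_3,d_3d_4,d_2d_4,d_4d_5,d_2d_5$. For $\ell\ge 0$, $M_1^{\ell}$ denotes any graph of the following form: vertices $a_1,a_2,a_3,a_4$ forming a 4-cycle $a_1a_2a_3a_4$ plus exactly one of the chords $a_1a_3$, $a_2a_4$; vertices $b_1,b_2,b_3,b_4$ forming a 4-cycle $b_1b_2b_3b_4$ plus exactly one of the chords $b_1b_3$, $b_2b_4$; and vertices $c_0=a_1, c_1,\dots,c_{2\ell-1}, c_{2\ell}=b_1$ such that for each $1\le i\le \ell$ the vertices $c_{2i-2},c_{2i-1},c_{2i}$ form a triangle (edges $c_{2i-2}c_{2i-1}$, $c_{2i-2}c_{2i}$,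 $c_{2i-1}c_{2i}$), with no further edges; for $\ell=0$ there are no $c$-vertices and $a_1=b_1$. $B_1$ is the class of graphs having an EPG representation (paths on a rectangular grid, one per vertex, two vertices adjacent iff their paths share a grid edge) in which every path has at most one bend. *)

theory Defs
  imports Main
begin

definition simple_graph :: "'a set \<Rightarrow> 'a set set \<Rightarrow> bool" where
  "simple_graph V E \<longleftrightarrow> finite V \<and> E \<subseteq> {{u, v} | u v. u \<in> V \<and> v \<in> V \<and> u \<noteq> v}"

text \<open>Outerplanar: the vertices can be placed on a circle (cyclic order given by a
bijection to positions 0..n-1) such that the edges, drawn as chords, do not cross.\<close>

definition outerplanar :: "'a set \<Rightarrow> 'a set set \<Rightarrow> bool" where
  "outerplanar V E \<longleftrightarrow>
     (\<exists>pos :: 'a \<Rightarrow> nat. bij_betw pos V {0..<card V} \<and>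
        (\<forall>a b c d. {a, b} \<in> E \<longrightarrow> {c, d} \<in> E \<longrightarrow>
            \<not> (pos a < pos c \<and> pos c < pos b \<and> pos b < pos d)))"

definition maximal_outerplanar :: "'a set \<Rightarrow> 'a set set \<Rightarrow> bool" where
  "maximal_outerplanar V E \<longleftrightarrow> outerplanar V E \<and>
     (\<forall>u\<in>V. \<forall>v\<in>V. u \<noteq> v \<longrightarrow> {u, v} \<notin> E \<longrightarrow> \<not> outerplanar V (insert {u, v} E))"

definition induced_emb :: "'b set \<Rightarrow> 'b set set \<Rightarrow> 'a set \<Rightarrow> 'a set set \<Rightarrow> ('b \<Rightarrow> 'a) \<Rightarrow> bool" where
  "induced_emb VH EH V E f \<longleftrightarrow> inj_on f VH \<and> f ` VH \<subseteq> V \<and>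
     (\<forall>x\<in>VH. \<forall>y\<in>VH. ({f x, f y} \<in> E \<longleftrightarrow> {x, y} \<in> EH))"

definition has_induced :: "'b set \<Rightarrow> 'b set set \<Rightarrow> 'a set \<Rightarrow> 'a set set \<Rightarrow> bool" where
  "has_induced VH EH V E \<longleftrightarrow> (\<exists>f. induced_emb VH EH V E f)"

text \<open>S_3 with x1,x2,x3 = 0,1,2 and y1,y2,y3 = 3,4,5.\<close>

definition S3_V :: "nat set" where "S3_V = {0..5}"

definition S3_E :: "nat set set" where
  "S3_E = {{0,1},{0,2},{1,2},{0,3},{1,3},{1,4},{2,4},{2,5},{0,5}}"

definition red_V :: "'a set \<Rightarrow> 'a set set \<Rightarrow> 'a set" where
  "red_V V E = {f i | f i. induced_emb S3_V S3_E V E f \<and> i \<in> {0,1,2}}"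

definition red_E :: "'a set \<Rightarrow> 'a set set \<Rightarrow> 'a set set" where
  "red_E V E = {{f i, f j} | f i j. induced_emb S3_V S3_E V E f \<and>
                  i \<in> {0,1,2} \<and> j \<in> {0,1,2} \<and> i \<noteq> j}"

text \<open>M_1 with d_i = i.\<close>

definition M1_V :: "nat set" where "M1_V = {1..5}"

definition M1_E :: "nat set set" where
  "M1_E = {{1,2},{1,3},{2,3},{3,4},{2,4},{4,5},{2,5}}"

text \<open>M_1^l: c_i = i (0 \<le> i \<le> 2l), a_1 = c_0 = 0, a_2,a_3,a_4 = 2l+1,2l+2,2l+3,
b_1 = c_{2l} = 2l, b_2,b_3,b_4 = 2l+4,2l+5,2l+6. The booleans ca, cb select the chord
(True: a_1a_3 resp. b_1b_3; False: a_2a_4 resp. b_2b_4).\<close>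

definition M1l_V :: "nat \<Rightarrow> nat set" where "M1l_V l = {0..2*l+6}"

definition M1l_E :: "nat \<Rightarrow> bool \<Rightarrow> bool \<Rightarrow> nat set set" where
  "M1l_E l ca cb =
     {{0, 2*l+1}, {2*l+1, 2*l+2}, {2*l+2, 2*l+3}, {2*l+3, 0},
      if ca then {0, 2*l+2} else {2*l+1, 2*l+3}}
   \<union> {{2*l, 2*l+4}, {2*l+4, 2*l+5}, {2*l+5, 2*l+6}, {2*l+6, 2*l},
      if cb then {2*l, 2*l+5} else {2*l+4, 2*l+6}}
   \<union> (\<Union>i\<in>{1..l}. {{2*i-2, 2*i-1}, {2*i-2, 2*i}, {2*i-1, 2*i}})"

text \<open>Grid points are int pairs; grid edges are sets of two points at unit distance.\<close>

definition hseg :: "int \<Rightarrow> int \<Rightarrow> int \<Rightarrow> (int \<times> int) set set" where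
  "hseg y a b = {{(i, y), (i + 1, y)} | i. min a b \<le> i \<and> i + 1 \<le> max a b}"

definition vseg :: "int \<Rightarrow> int \<Rightarrow> int \<Rightarrow> (int \<times> int) set set" where
  "vseg x a b = {{(x, j), (x, j + 1)} | j. min a b \<le> j \<and> j + 1 \<le> max a b}"

definition bend1_path :: "(int \<times> int) set set \<Rightarrow> bool" where
  "bend1_path P \<longleftrightarrow> P \<noteq> {} \<and>
     (\<exists>cx cy h v. P = hseg cy cx h \<union> vseg cx cy v)"

definition in_B1 :: "'a set \<Rightarrow> 'a set set \<Rightarrow> bool" where
  "in_B1 V E \<longleftrightarrow> (\<exists>P :: 'a \<Rightarrow> (int \<times> int) set set.
      (\<forall>v\<in>V. bend1_path (P v)) \<and>
      (\<forall>u\<in>V. \<forall>v\<in>V. u \<noteq> v \<longrightarrow> ({u, v} \<in> E \<longleftrightarrow> P u \<inter> P v \<noteq> {})))"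

end

theory Submission
  imports Defs
begin

text \<open>In a one-bend EPG representation the three paths of the central triangle of an induced S3 do
  not share a grid edge, so they form a claw: they meet at a grid point, use three of its four arms
  and pairwise share one.  Every edge of the reduced graph lies in such a triangle.  A path bends at
  most once, and at a claw at least two of the three paths bend.  In a diamond of reduced triangles
  this forces the bend of one vertex to a claw of the diamond, and along a chain of reduced triangles
  the forced bend is passed on from triangle to triangle.  In \<open>M\<^sub>1\<close> and \<open>M\<^sub>1\<^sup>l\<close> one path is
  thus forced to bend at two claws belonging to otherwise disjoint triangles; both claws then lie at
  its bend point, and outerplanarity rules this out.\<close>

section \<open>Outerplanar obstructions\<close>

text \<open>Positions are taken in \<^typ>\<open>int\<close>: the SMT solver fails on the crossing conditions over
  \<^typ>\<open>nat\<close>.\<close>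

lemma outerplanar_noncrossing_on:
  assumes "outerplanar V E" "U \<subseteq> V"
  obtains pos :: "'a \<Rightarrow> int" where "inj_on pos U"
    and "\<forall>x\<in>U. \<forall>y\<in>U. \<forall>z\<in>U. \<forall>w\<in>U. {x, y} \<in> E \<longrightarrow> {z, w} \<in> E \<longrightarrow>
           \<not> (pos x < pos z \<and> pos z < pos y \<and> pos y < pos w)"
proof -
  obtain p :: "'a \<Rightarrow> nat" where "inj_on p V"
    and "\<And>a b c d. {a, b} \<in> E \<Longrightarrow> {c, d} \<in> E \<Longrightarrow> \<not> (p a < p c \<and> p c < p b \<and> p b < p d)"
    using assms(1) unfolding outerplanar_def bij_betw_def by blast
  with assms(2) show thesis
    using that[of "int \<circ> p"] by (simp add: inj_on_def subset_iff)
qed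

lemma outerplanar_no_K4:
  assumes "outerplanar V E" "{a, b, c, d} \<subseteq> V" "distinct [a, b, c, d]"
    and "{a, b} \<in> E" "{a, c} \<in> E" "{a, d} \<in> E" "{b, c} \<in> E" "{b, d} \<in> E" "{c, d} \<in> E"
  shows False
proof -
  obtain pos :: "'a \<Rightarrow> int" where "inj_on pos {a, b, c, d}"
    and "\<forall>x\<in>{a, b, c, d}. \<forall>y\<in>{a, b, c, d}. \<forall>z\<in>{a, b, c, d}. \<forall>w\<in>{a, b, c, d}.
           {x, y} \<in> E \<longrightarrow> {z, w} \<in> E \<longrightarrow> \<not> (pos x < pos z \<and> pos z < pos y \<and> pos y < pos w)"
    by (rule outerplanar_noncrossing_on[OF assms(1,2)])
  moreover from this(1) have "distinct [pos a, pos b, pos c, pos d]"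
    using assms(3) by (auto simp: inj_on_eq_iff)
  ultimately show False
    using assms(4-) by (simp add: insert_commute) (smt (z3))
qed

lemma outerplanar_no_K113:
  assumes "outerplanar V E" "{a, b, c1, c2, c3} \<subseteq> V" "distinct [a, b, c1, c2, c3]"
    and "{a, b} \<in> E" "{a, c1} \<in> E" "{a, c2} \<in> E" "{a, c3} \<in> E"
    and "{b, c1} \<in> E" "{b, c2} \<in> E" "{b, c3} \<in> E"
  shows False
proof -
  obtain pos :: "'a \<Rightarrow> int" where "inj_on pos {a, b, c1, c2, c3}"
    and "\<forall>x\<in>{a, b, c1, c2, c3}. \<forall>y\<in>{a, b, c1, c2, c3}. \<forall>z\<in>{a, b, c1, c2, c3}. \<forall>w\<in>{a, b, c1, c2, c3}.
           {x, y} \<in> E \<longrightarrow> {z, w} \<in> E \<longrightarrow> \<not> (pos x < pos z \<and> pos z < pos y \<and> pos y < pos w)"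
    by (rule outerplanar_noncrossing_on[OF assms(1,2)])
  moreover from this(1) have "distinct [pos a, pos b, pos c1, pos c2, pos c3]"
    using assms(3) by (auto simp: inj_on_eq_iff)
  ultimately show False
    using assms(4-) by (simp add: insert_commute) (smt (z3))
qed

lemma outerplanar_no_W4:
  assumes "outerplanar V E" "{h, a, b, c, d} \<subseteq> V" "distinct [h, a, b, c, d]"
    and "{h, a} \<in> E" "{h, b} \<in> E" "{h, c} \<in> E" "{h, d} \<in> E"
    and "{a, b} \<in> E" "{b, c} \<in> E" "{c, d} \<in> E" "{d, a} \<in> E"
  shows False
proof -
  obtain pos :: "'a \<Rightarrow> int" where "inj_on pos {h, a, b, c, d}"
    and "\<forall>x\<in>{h, a, b, c, d}. \<forall>y\<in>{h, a, b, c, d}. \<forall>z\<in>{h, a, b, c, d}. \<forall>w\<in>{h, a, b, c, d}.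
           {x, y} \<in> E \<longrightarrow> {z, w} \<in> E \<longrightarrow> \<not> (pos x < pos z \<and> pos z < pos y \<and> pos y < pos w)"
    by (rule outerplanar_noncrossing_on[OF assms(1,2)])
  moreover from this(1) have "distinct [pos h, pos a, pos b, pos c, pos d]"
    using assms(3) by (auto simp: inj_on_eq_iff)
  ultimately show False
    using assms(4-) by (simp add: insert_commute) (smt (z3))
qed

section \<open>Induced copies of S3 and the reduced graph\<close>

lemma simple_graph_edgeD:
  assumes "simple_graph V E" "{u, v} \<in> E"
  shows "u \<in> V" "v \<in> V" "u \<noteq> v"
proof -
  obtain x y where "{u, v} = {x, y}" "x \<in> V" "y \<in> V" "x \<noteq> y"
    using assms unfolding simple_graph_def by blast
  then show "u \<in> V" "v \<in> V" "u \<noteq> v" by (auto simp: doubleton_eq_iff)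
qed

definition induced_S3 :: "'a set set \<Rightarrow> 'a \<Rightarrow> 'a \<Rightarrow> 'a \<Rightarrow> 'a \<Rightarrow> 'a \<Rightarrow> 'a \<Rightarrow> bool" where
  "induced_S3 E x1 x2 x3 y1 y2 y3 \<longleftrightarrow> distinct [x1, x2, x3, y1, y2, y3] \<and>
     {x1, x2} \<in> E \<and> {x1, x3} \<in> E \<and> {x2, x3} \<in> E \<and> {x1, y1} \<in> E \<and> {x2, y1} \<in> E \<and>
     {x2, y2} \<in> E \<and> {x3, y2} \<in> E \<and> {x3, y3} \<in> E \<and> {x1, y3} \<in> E \<and>
     {x1, y2} \<notin> E \<and> {x2, y3} \<notin> E \<and> {x3, y1} \<notin> E \<and> {y1, y2} \<notin> E \<and> {y1, y3} \<notin> E \<and> {y2, y3} \<notin> E"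

lemma induced_S3_rotate: "induced_S3 E x1 x2 x3 y1 y2 y3 \<Longrightarrow> induced_S3 E x2 x3 x1 y2 y3 y1"
  unfolding induced_S3_def by (auto simp: insert_commute)

text \<open>In an outerplanar graph a triangle each of whose edges lies in a second triangle is the
  centre of an induced S3: coincidences among the apexes would give a \<open>K\<^sub>4\<close>, and an edge between
  two apexes a wheel \<open>W\<^sub>4\<close>.\<close>

lemma outerplanar_induced_S3_of_triangle:
  assumes sg: "simple_graph V E" and op: "outerplanar V E"
    and abc: "{a, b} \<in> E" "{b, c} \<in> E" "{c, a} \<in> E"
    and o1: "{o1, a} \<in> E" "{o1, b} \<in> E" "o1 \<noteq> c"
    and o2: "{o2, b} \<in> E" "{o2, c} \<in> E" "o2 \<noteq> a"
    and o3: "{o3, c} \<in> E" "{o3, a} \<in> E" "o3 \<noteq> b"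
  shows "induced_S3 E a b c o1 o2 o3"
proof -
  note edge = simple_graph_edgeD[OF sg]
  have V: "a \<in> V" "b \<in> V" "c \<in> V" "o1 \<in> V" "o2 \<in> V" "o3 \<in> V" using edge abc o1 o2 o3 by blast+
  have ne: "a \<noteq> b" "b \<noteq> c" "c \<noteq> a" "o1 \<noteq> a" "o1 \<noteq> b" "o2 \<noteq> b" "o2 \<noteq> c" "o3 \<noteq> c" "o3 \<noteq> a"
    using edge abc o1 o2 o3 by blast+
  have E': "{b, a} \<in> E" "{c, b} \<in> E" "{a, c} \<in> E" "{a, o1} \<in> E" "{b, o1} \<in> E"
    "{b, o2} \<in> E" "{c, o2} \<in> E" "{c, o3} \<in> E" "{a, o3} \<in> E"
    using abc o1 o2 o3 by (simp_all add: insert_commute)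
  note K4 = outerplanar_no_K4[OF op] and W4 = outerplanar_no_W4[OF op]
  have apexes: "o1 \<noteq> o2" "o1 \<noteq> o3" "o2 \<noteq> o3"
    using K4[of a b c o1] K4[of a b c o2] V ne abc E' o1 o2 o3 by auto
  have "{a, o2} \<notin> E" using K4[of a b c o2] V ne abc E' o2 by auto
  moreover have "{b, o3} \<notin> E" using K4[of a b c o3] V ne abc E' o3 by auto
  moreover have "{c, o1} \<notin> E" using K4[of a b c o1] V ne abc E' o1 by auto
  moreover have "{o1, o2} \<notin> E" using W4[of b a o1 o2 c] V ne apexes abc E' o1 o2 by auto
  moreover have "{o2, o3} \<notin> E" using W4[of c b o2 o3 a] V ne apexes abc E' o2 o3 by auto
  moreover have "{o1, o3} \<notin> E" using W4[of a c o3 o1 b] V ne apexes abc E' o1 o3 by (auto simp: insert_commute)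
  ultimately show ?thesis
    unfolding induced_S3_def using ne apexes abc E' o1 o2 o3 by auto
qed

text \<open>An edge of an outerplanar graph lies in at most two triangles, for three would form a
  \<open>K\<^sub>1\<^sub>,\<^sub>1\<^sub>,\<^sub>3\<close>.  Hence \<open>w\<^sub>1 = y\<^sub>1\<close> and \<open>w\<^sub>2 = y\<^sub>3\<close>, which are not adjacent.\<close>

lemma outerplanar_S3_no_matched_triangle:
  assumes sg: "simple_graph V E" and op: "outerplanar V E"
    and S3: "induced_S3 E s u1 u2 y1 y2 y3"
    and w: "{s, w1} \<in> E" "{s, w2} \<in> E" "{w1, w2} \<in> E" "{w1, w2} \<inter> {u1, u2} = {}"
    and matched: "{u1, w1} \<in> E" "{u2, w2} \<in> E"
  shows False
proof -
  note edge = simple_graph_edgeD[OF sg]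
  have S3': "distinct [s, u1, u2, y1, y2, y3]" "{s, u1} \<in> E" "{s, u2} \<in> E" "{u1, u2} \<in> E"
    "{s, y1} \<in> E" "{u1, y1} \<in> E" "{u2, y3} \<in> E" "{s, y3} \<in> E" "{y1, y3} \<notin> E"
    using S3 unfolding induced_S3_def by auto
  have V: "s \<in> V" "u1 \<in> V" "u2 \<in> V" "y1 \<in> V" "y3 \<in> V" "w1 \<in> V" "w2 \<in> V"
    using edge S3'(2-9) w(1-3) by blast+
  have ne: "w1 \<noteq> s" "w2 \<noteq> s" "w1 \<noteq> u1" "w1 \<noteq> u2" "w2 \<noteq> u1" "w2 \<noteq> u2"
    using edge(3) w by auto
  have "w1 = y1"
  proof (rule ccontr)
    assume "w1 \<noteq> y1"
    then show False
      using outerplanar_no_K113[OF op, of s u1 u2 y1 w1] V ne S3' w matched by simp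
  qed
  moreover have "w2 = y3"
  proof (rule ccontr)
    assume "w2 \<noteq> y3"
    then show False
      using outerplanar_no_K113[OF op, of s u2 u1 y3 w2] V ne S3' w matched by (auto simp: insert_commute)
  qed
  ultimately show False using S3' w by simp
qed

lemma S3_central_edge_two_apexes:
  assumes "i \<in> {0, 1, 2}" "j \<in> {0, 1, 2}" "i \<noteq> j"
  obtains k k' where "k \<in> S3_V" "k' \<in> S3_V" "k \<noteq> k'"
    "{k, i} \<in> S3_E" "{k, j} \<in> S3_E" "{k', i} \<in> S3_E" "{k', j} \<in> S3_E"
proof -
  have "(i, j) \<in> {(0, 1), (1, 0), (1, 2), (2, 1), (0, 2), (2, 0)}" using assms by auto
  then show thesis
    using that[of 2 3] that[of 0 4] that[of 1 5] by (auto simp: S3_V_def S3_E_def doubleton_eq_iff)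
qed

lemma red_E_subset: "red_E V E \<subseteq> E"
proof
  fix e assume "e \<in> red_E V E"
  then obtain f i j where f: "induced_emb S3_V S3_E V E f" and ij: "i \<in> {0, 1, 2}" "j \<in> {0, 1, 2}" "i \<noteq> j"
    and e: "e = {f i, f j}"
    unfolding red_E_def by blast
  have "{i, j} \<in> S3_E" using ij by (auto simp: S3_E_def doubleton_eq_iff)
  moreover have "i \<in> S3_V" "j \<in> S3_V" using ij by (auto simp: S3_V_def)
  ultimately show "e \<in> E" using f e unfolding induced_emb_def by blast
qed

lemma red_E_common_neighbour:
  assumes "{u, v} \<in> red_E V E"
  obtains w where "w \<noteq> c" "{w, u} \<in> E" "{w, v} \<in> E"
proof -
  obtain f i j where f: "induced_emb S3_V S3_E V E f" and ij: "i \<in> {0, 1, 2}" "j \<in> {0, 1, 2}" "i \<noteq> j"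
    and uv: "{u, v} = {f i, f j}"
    using assms unfolding red_E_def by blast
  obtain k k' where k: "k \<in> S3_V" "k' \<in> S3_V" "k \<noteq> k'"
    "{k, i} \<in> S3_E" "{k, j} \<in> S3_E" "{k', i} \<in> S3_E" "{k', j} \<in> S3_E"
    using S3_central_edge_two_apexes[OF ij] .
  have "i \<in> S3_V" "j \<in> S3_V" using ij by (auto simp: S3_V_def)
  then have "{f k, f i} \<in> E" "{f k, f j} \<in> E" "{f k', f i} \<in> E" "{f k', f j} \<in> E" "f k \<noteq> f k'"
    using f k unfolding induced_emb_def inj_on_def by blast+
  moreover have "(u = f i \<and> v = f j) \<or> (u = f j \<and> v = f i)" using uv by (simp add: doubleton_eq_iff)
  ultimately show thesis using that[of "f k"] that[of "f k'"] by (cases "f k = c") auto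
qed

lemma induced_emb_edge:
  "induced_emb VH EH V E f \<Longrightarrow> {x, y} \<in> EH \<Longrightarrow> x \<in> VH \<Longrightarrow> y \<in> VH \<Longrightarrow> {f x, f y} \<in> E"
  unfolding induced_emb_def by blast

lemma M1l_E_cycle_edges:
  "{0, 2*l+1} \<in> M1l_E l ca cb" "{2*l+1, 2*l+2} \<in> M1l_E l ca cb" "{2*l+2, 2*l+3} \<in> M1l_E l ca cb"
  "{2*l+3, 0} \<in> M1l_E l ca cb" "{0, 2*l+2} \<in> M1l_E l ca cb \<or> {2*l+1, 2*l+3} \<in> M1l_E l ca cb"
  "{2*l, 2*l+4} \<in> M1l_E l ca cb" "{2*l+4, 2*l+5} \<in> M1l_E l ca cb" "{2*l+5, 2*l+6} \<in> M1l_E l ca cb"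
  "{2*l+6, 2*l} \<in> M1l_E l ca cb" "{2*l, 2*l+5} \<in> M1l_E l ca cb \<or> {2*l+4, 2*l+6} \<in> M1l_E l ca cb"
  by (cases ca; cases cb; simp add: M1l_E_def)+

lemma M1l_E_chain_edges:
  assumes "k < l"
  shows "{2*k, 2*k+1} \<in> M1l_E l ca cb" "{2*k+1, 2*k+2} \<in> M1l_E l ca cb" "{2*k+2, 2*k} \<in> M1l_E l ca cb"
proof -
  have k: "Suc k \<in> {1..l}" using assms by simp
  show "{2*k, 2*k+1} \<in> M1l_E l ca cb" "{2*k+1, 2*k+2} \<in> M1l_E l ca cb" "{2*k+2, 2*k} \<in> M1l_E l ca cb"
    unfolding M1l_E_def by (rule UnI2, rule UN_I[OF k], simp add: insert_commute)+
qed

section \<open>Grid paths with at most one bend\<close>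

text \<open>A path is stored by its bend point \<open>(bend_x, bend_y)\<close>, the extent \<open>[h_lo, h_hi]\<close> of its
  horizontal segment on row \<open>bend_y\<close> and the extent \<open>[v_lo, v_hi]\<close> of its vertical segment on
  column \<open>bend_x\<close>.\<close>

record bpath =
  bend_x :: int
  bend_y :: int
  h_lo :: int
  h_hi :: int
  v_lo :: int
  v_hi :: int

definition wf_bpath :: "bpath \<Rightarrow> bool" where
  "wf_bpath P \<longleftrightarrow>
     h_lo P \<le> bend_x P \<and> bend_x P \<le> h_hi P \<and> (bend_x P = h_lo P \<or> bend_x P = h_hi P) \<and>
     v_lo P \<le> bend_y P \<and> bend_y P \<le> v_hi P \<and> (bend_y P = v_lo P \<or> bend_y P = v_hi P)"

definition bpath_edges :: "bpath \<Rightarrow> (int \<times> int) set set" where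
  "bpath_edges P = hseg (bend_y P) (h_lo P) (h_hi P) \<union> vseg (bend_x P) (v_lo P) (v_hi P)"

definition overlap :: "bpath \<Rightarrow> bpath \<Rightarrow> bool" where
  "overlap P P' \<longleftrightarrow>
     (bend_y P = bend_y P' \<and> h_lo P < h_hi P' \<and> h_lo P' < h_hi P \<and> h_lo P < h_hi P \<and> h_lo P' < h_hi P') \<or>
     (bend_x P = bend_x P' \<and> v_lo P < v_hi P' \<and> v_lo P' < v_hi P \<and> v_lo P < v_hi P \<and> v_lo P' < v_hi P')"

lemma overlap_commute: "overlap P P' \<longleftrightarrow> overlap P' P"
  unfolding overlap_def by auto

lemma hseg_vseg_disjoint: "hseg y a b \<inter> vseg x c d = {}"
  unfolding hseg_def vseg_def by (auto simp: doubleton_eq_iff)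

lemma hseg_inter_iff:
  assumes "a \<le> b" "a' \<le> b'"
  shows "hseg y a b \<inter> hseg y' a' b' \<noteq> {} \<longleftrightarrow> y = y' \<and> a < b' \<and> a' < b \<and> a < b \<and> a' < b'"
proof
  assume "hseg y a b \<inter> hseg y' a' b' \<noteq> {}"
  then obtain i j where "{(i, y), (i + 1, y)} = {(j, y'), (j + 1, y')}"
    "a \<le> i" "i + 1 \<le> b" "a' \<le> j" "j + 1 \<le> b'"
    using assms unfolding hseg_def by auto
  then show "y = y' \<and> a < b' \<and> a' < b \<and> a < b \<and> a' < b'" by (auto simp: doubleton_eq_iff)
next
  assume "y = y' \<and> a < b' \<and> a' < b \<and> a < b \<and> a' < b'"
  then have "{(max a a', y), (max a a' + 1, y)} \<in> hseg y a b \<inter> hseg y' a' b'"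
    using assms unfolding hseg_def by auto
  then show "hseg y a b \<inter> hseg y' a' b' \<noteq> {}" by blast
qed

lemma vseg_inter_iff:
  assumes "a \<le> b" "a' \<le> b'"
  shows "vseg x a b \<inter> vseg x' a' b' \<noteq> {} \<longleftrightarrow> x = x' \<and> a < b' \<and> a' < b \<and> a < b \<and> a' < b'"
proof
  assume "vseg x a b \<inter> vseg x' a' b' \<noteq> {}"
  then obtain i j where "{(x, i), (x, i + 1)} = {(x', j), (x', j + 1)}"
    "a \<le> i" "i + 1 \<le> b" "a' \<le> j" "j + 1 \<le> b'"
    using assms unfolding vseg_def by auto
  then show "x = x' \<and> a < b' \<and> a' < b \<and> a < b \<and> a' < b'" by (auto simp: doubleton_eq_iff)
next
  assume "x = x' \<and> a < b' \<and> a' < b \<and> a < b \<and> a' < b'"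
  then have "{(x, max a a'), (x, max a a' + 1)} \<in> vseg x a b \<inter> vseg x' a' b'"
    using assms unfolding vseg_def by auto
  then show "vseg x a b \<inter> vseg x' a' b' \<noteq> {}" by blast
qed

lemma bpath_edges_inter_iff_overlap:
  assumes "wf_bpath P" "wf_bpath P'"
  shows "bpath_edges P \<inter> bpath_edges P' \<noteq> {} \<longleftrightarrow> overlap P P'"
proof -
  have "bpath_edges P \<inter> bpath_edges P' =
      (hseg (bend_y P) (h_lo P) (h_hi P) \<inter> hseg (bend_y P') (h_lo P') (h_hi P')) \<union>
      (vseg (bend_x P) (v_lo P) (v_hi P) \<inter> vseg (bend_x P') (v_lo P') (v_hi P'))"
    unfolding bpath_edges_def using hseg_vseg_disjoint by blast
  then show ?thesis
    using assms hseg_inter_iff vseg_inter_iff unfolding wf_bpath_def overlap_def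
    by (smt (verit) Un_empty)
qed

lemma bend1_path_bpath:
  assumes "bend1_path S"
  obtains P where "wf_bpath P" "S = bpath_edges P"
proof -
  obtain cx cy h v where S: "S = hseg cy cx h \<union> vseg cx cy v"
    using assms unfolding bend1_path_def by blast
  let ?P = "\<lparr>bend_x = cx, bend_y = cy, h_lo = min cx h, h_hi = max cx h, v_lo = min cy v, v_hi = max cy v\<rparr>"
  have "S = bpath_edges ?P" unfolding S bpath_edges_def hseg_def vseg_def by simp
  moreover have "wf_bpath ?P" unfolding wf_bpath_def by auto
  ultimately show thesis using that by blast
qed

lemma in_B1_bpath_representation:
  assumes "in_B1 V E"
  obtains Q where "\<And>v. v \<in> V \<Longrightarrow> wf_bpath (Q v)"
    and "\<And>u v. u \<in> V \<Longrightarrow> v \<in> V \<Longrightarrow> u \<noteq> v \<Longrightarrow> overlap (Q u) (Q v) \<longleftrightarrow> {u, v} \<in> E"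
proof -
  obtain P where P: "\<forall>v\<in>V. bend1_path (P v)"
    and E: "\<forall>u\<in>V. \<forall>v\<in>V. u \<noteq> v \<longrightarrow> ({u, v} \<in> E \<longleftrightarrow> P u \<inter> P v \<noteq> {})"
    using assms unfolding in_B1_def by blast
  have "\<forall>v\<in>V. \<exists>B. wf_bpath B \<and> P v = bpath_edges B"
    using P bend1_path_bpath by metis
  then obtain Q where "\<forall>v\<in>V. wf_bpath (Q v) \<and> P v = bpath_edges (Q v)"
    by (rule bchoice [elim_format]) blast
  then show thesis
    using that E bpath_edges_inter_iff_overlap by metis
qed

section \<open>Claws\<close>

datatype dir = East | West | North | South

fun opp :: "dir \<Rightarrow> dir" where
  "opp East = West" | "opp West = East" | "opp North = South" | "opp South = North"

lemma ex_dir: "(\<exists>d. P d) \<longleftrightarrow> P East \<or> P West \<or> P North \<or> P South"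
  by (metis dir.exhaust)

lemma three_dirs_opposite_pair: "distinct [a, b, c] \<Longrightarrow> b = opp a \<or> c = opp a \<or> c = opp b"
  by (cases a; cases b; cases c) auto

text \<open>\<open>arm P px py d\<close>: the path \<open>P\<close> contains the grid edge leaving \<open>(px, py)\<close> in direction \<open>d\<close>.\<close>

definition arm :: "bpath \<Rightarrow> int \<Rightarrow> int \<Rightarrow> dir \<Rightarrow> bool" where
  "arm P px py d \<longleftrightarrow> (case d of
       East \<Rightarrow> bend_y P = py \<and> h_lo P \<le> px \<and> px + 1 \<le> h_hi P
     | West \<Rightarrow> bend_y P = py \<and> h_lo P \<le> px - 1 \<and> px \<le> h_hi P
     | North \<Rightarrow> bend_x P = px \<and> v_lo P \<le> py \<and> py + 1 \<le> v_hi P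
     | South \<Rightarrow> bend_x P = px \<and> v_lo P \<le> py - 1 \<and> py \<le> v_hi P)"

definition bent_at :: "bpath \<Rightarrow> int \<Rightarrow> int \<Rightarrow> bool" where
  "bent_at P px py \<longleftrightarrow> bend_x P = px \<and> bend_y P = py \<and> h_lo P < h_hi P \<and> v_lo P < v_hi P"

definition claw :: "bpath \<Rightarrow> bpath \<Rightarrow> bpath \<Rightarrow> int \<Rightarrow> int \<Rightarrow> bool" where
  "claw A B C px py \<longleftrightarrow> (\<exists>a b c. distinct [a, b, c] \<and> arm A px py a \<and> arm A px py b \<and>
     arm B px py b \<and> arm B px py c \<and> arm C px py a \<and> arm C px py c)"

lemma bent_at_if_perpendicular_arms:
  "arm P px py a \<Longrightarrow> arm P px py b \<Longrightarrow> a \<noteq> b \<Longrightarrow> b \<noteq> opp a \<Longrightarrow> bent_at P px py"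
  by (cases a; cases b) (auto simp: arm_def bent_at_def)

lemma bent_arms_not_opposite:
  "wf_bpath P \<Longrightarrow> bent_at P px py \<Longrightarrow> arm P px py a \<Longrightarrow> arm P px py b \<Longrightarrow> b \<noteq> opp a"
  by (cases a) (auto simp: wf_bpath_def arm_def bent_at_def)

lemma bent_at_unique: "bent_at P px py \<Longrightarrow> bent_at P qx qy \<Longrightarrow> px = qx \<and> py = qy"
  by (simp add: bent_at_def)

lemma no_three_arms:
  assumes "wf_bpath P" "distinct [a, b, c]" "arm P px py a" "arm P px py b" "arm P px py c"
  shows False
proof -
  have "b \<noteq> opp a \<or> c \<noteq> opp a" using assms(2) by auto
  then have "bent_at P px py"
    using bent_at_if_perpendicular_arms assms(2-5) by (metis distinct_length_2_or_more)
  then show False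
    using three_dirs_opposite_pair[OF assms(2)] bent_arms_not_opposite[OF assms(1)] assms(3-5) by metis
qed

lemma overlap_if_common_arm: "arm U px py d \<Longrightarrow> arm W px py d \<Longrightarrow> overlap U W"
  by (cases d) (auto simp: arm_def overlap_def)

lemma claw_swap12: "claw A B C px py \<Longrightarrow> claw B A C px py"
  unfolding claw_def by (metis distinct_length_2_or_more distinct_singleton)

lemma claw_swap23: "claw A B C px py \<Longrightarrow> claw A C B px py"
  unfolding claw_def by (metis distinct_length_2_or_more distinct_singleton)

lemma claw_rotate: "claw A B C px py \<Longrightarrow> claw C A B px py"
  by (meson claw_swap12 claw_swap23)

definition S3_pattern :: "bpath \<Rightarrow> bpath \<Rightarrow> bpath \<Rightarrow> bpath \<Rightarrow> bpath \<Rightarrow> bpath \<Rightarrow> bool" where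
  "S3_pattern X1 X2 X3 Y1 Y2 Y3 \<longleftrightarrow>
     overlap X1 X2 \<and> overlap X1 X3 \<and> overlap X2 X3 \<and> overlap X1 Y1 \<and> overlap X2 Y1 \<and>
     overlap X2 Y2 \<and> overlap X3 Y2 \<and> overlap X3 Y3 \<and> overlap X1 Y3 \<and>
     \<not> overlap X1 Y2 \<and> \<not> overlap X2 Y3 \<and> \<not> overlap X3 Y1 \<and>
     \<not> overlap Y1 Y2 \<and> \<not> overlap Y1 Y3 \<and> \<not> overlap Y2 Y3"

text \<open>The central triangle of a represented S3 is not an edge clique, so its paths meet in a claw;
  the claw point is the bend of one of them.  The case analysis is left to the SMT solver.\<close>

lemma S3_pattern_claw:
  assumes "wf_bpath X1" "wf_bpath X2" "wf_bpath X3" "wf_bpath Y1" "wf_bpath Y2" "wf_bpath Y3"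
    and "S3_pattern X1 X2 X3 Y1 Y2 Y3"
  shows "\<exists>px py. claw X1 X2 X3 px py"
proof -
  have "claw X1 X2 X3 (bend_x X1) (bend_y X1) \<or> claw X1 X2 X3 (bend_x X2) (bend_y X2) \<or>
      claw X1 X2 X3 (bend_x X3) (bend_y X3)"
    using assms unfolding wf_bpath_def S3_pattern_def overlap_def claw_def arm_def ex_dir
    by simp (smt (z3))
  then show ?thesis by blast
qed

lemma claw_straight_centre:
  assumes "claw A B C px py" "\<not> bent_at A px py"
  shows "bent_at B px py" "bent_at C px py"
proof -
  obtain a b c where abc: "distinct [a, b, c]" "arm A px py a" "arm A px py b"
    "arm B px py b" "arm B px py c" "arm C px py a" "arm C px py c"
    using assms(1) unfolding claw_def by blast
  have "b = opp a" using bent_at_if_perpendicular_arms abc assms(2) by fastforce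
  then have "c \<noteq> opp b" "c \<noteq> opp a" using abc(1) by (cases a; auto)+
  then show "bent_at B px py" "bent_at C px py"
    using bent_at_if_perpendicular_arms abc by auto
qed

lemma claw_not_all_bent:
  assumes "wf_bpath A" "wf_bpath B" "wf_bpath C" "claw A B C px py" "bent_at B px py" "bent_at C px py"
  shows "\<not> bent_at A px py"
proof
  assume "bent_at A px py"
  obtain a b c where "distinct [a, b, c]" "arm A px py a" "arm A px py b"
    "arm B px py b" "arm B px py c" "arm C px py a" "arm C px py c"
    using assms(4) unfolding claw_def by blast
  then show False
    using three_dirs_opposite_pair bent_arms_not_opposite assms(1-3,5,6) \<open>bent_at A px py\<close> by metis
qed

lemma claws_at_common_point:
  assumes wf: "wf_bpath S" "wf_bpath U1" "wf_bpath U2" "wf_bpath W1" "wf_bpath W2"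
    and claw: "claw S U1 U2 px py" "claw S W1 W2 px py"
  shows "(overlap U1 W1 \<and> overlap U2 W2) \<or> (overlap U1 W2 \<and> overlap U2 W1)"
proof -
  obtain a b c where abc: "distinct [a, b, c]" "arm S px py a" "arm S px py b"
    "arm U1 px py b" "arm U1 px py c" "arm U2 px py a" "arm U2 px py c"
    using claw(1) unfolding claw_def by blast
  obtain a' b' c' where abc': "distinct [a', b', c']" "arm S px py a'" "arm S px py b'"
    "arm W1 px py b'" "arm W1 px py c'" "arm W2 px py a'" "arm W2 px py c'"
    using claw(2) unfolding claw_def by blast
  have "a' \<in> {a, b}" "b' \<in> {a, b}"
    using no_three_arms[OF wf(1), of a b] abc abc' by (metis distinct_length_2_or_more insertCI)+
  then have "(a' = a \<and> b' = b) \<or> (a' = b \<and> b' = a)" using abc'(1) by auto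
  then show ?thesis
    using overlap_if_common_arm abc abc' by metis
qed

lemma claws_sharing_two_paths:
  assumes wf: "wf_bpath B" "wf_bpath C"
    and claw: "claw A B C px py" "claw D B C px py"
  shows "overlap A D"
proof -
  obtain a b c where abc: "distinct [a, b, c]" "arm A px py a"
    "arm B px py b" "arm B px py c" "arm C px py a" "arm C px py c"
    using claw(1) unfolding claw_def by blast
  obtain a' b' c' where abc': "distinct [a', b', c']" "arm D px py a'"
    "arm B px py b'" "arm B px py c'" "arm C px py a'" "arm C px py c'"
    using claw(2) unfolding claw_def by blast
  have "b' \<in> {b, c}" "c' \<in> {b, c}"
    using no_three_arms[OF wf(1), of b c] abc abc' by (metis distinct_length_2_or_more insertCI)+
  moreover have "a' \<in> {a, c}" "c' \<in> {a, c}"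
    using no_three_arms[OF wf(2), of a c] abc abc' by (metis distinct_length_2_or_more insertCI)+
  ultimately have "a' = a" using abc(1) abc'(1) by auto
  then show ?thesis using overlap_if_common_arm abc(2) abc'(2) by blast
qed

lemma claws_on_chord_bent:
  assumes wf: "wf_bpath P1" "wf_bpath P2" "wf_bpath P3" "wf_bpath P4"
    and claw: "claw P1 P2 P3 q1x q1y" "claw P1 P3 P4 q2x q2y"
    and "\<not> overlap P2 P4"
  shows "bent_at P1 q1x q1y \<or> bent_at P1 q2x q2y"
proof (rule ccontr)
  assume "\<not> ?thesis"
  then have "bent_at P3 q1x q1y" "bent_at P3 q2x q2y"
    using claw_straight_centre claw by blast+
  then have "q1x = q2x \<and> q1y = q2y" by (rule bent_at_unique)
  then have "overlap P2 P4"
    using claws_sharing_two_paths[OF wf(1,3) claw_swap12[OF claw(1)]] claw_rotate[OF claw(2)] by simp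
  with assms(7) show False ..
qed

lemma claws_off_chord_bent:
  assumes wf: "wf_bpath P2" "wf_bpath P4"
    and claw: "claw P1 P2 P4 q1x q1y" "claw P2 P3 P4 q2x q2y"
    and "\<not> overlap P1 P3"
  shows "bent_at P1 q1x q1y"
proof (rule ccontr)
  assume "\<not> ?thesis"
  then have P2: "bent_at P2 q1x q1y" and P4: "bent_at P4 q1x q1y"
    using claw_straight_centre claw(1) by blast+
  show False
  proof (cases "q1x = q2x \<and> q1y = q2y")
    case True
    then have "overlap P1 P3"
      using claws_sharing_two_paths[OF wf claw(1)] claw_swap12[OF claw(2)] by simp
    with assms(5) show False ..
  next
    case False
    then have "\<not> bent_at P2 q2x q2y" using bent_at_unique[OF P2] by blast
    then have "bent_at P4 q2x q2y" using claw_straight_centre claw(2) by blast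
    with False show False using bent_at_unique[OF P4] by blast
  qed
qed

section \<open>Outerplanar graphs with a one-bend representation\<close>

locale outerplanar_B1_rep =
  fixes V :: "'a set" and E :: "'a set set" and Q :: "'a \<Rightarrow> bpath"
  assumes simple: "simple_graph V E" and outerplanar: "outerplanar V E"
    and wf: "\<And>v. v \<in> V \<Longrightarrow> wf_bpath (Q v)"
    and overlap_iff_edge: "\<And>u v. u \<in> V \<Longrightarrow> v \<in> V \<Longrightarrow> u \<noteq> v \<Longrightarrow> overlap (Q u) (Q v) \<longleftrightarrow> {u, v} \<in> E"
begin

lemma induced_S3_in_V:
  assumes "induced_S3 E x1 x2 x3 y1 y2 y3"
  shows "x1 \<in> V" "x2 \<in> V" "x3 \<in> V" "y1 \<in> V" "y2 \<in> V" "y3 \<in> V"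
  using assms simple_graph_edgeD[OF simple] unfolding induced_S3_def by blast+

lemma red_E_in_V:
  assumes "{u, v} \<in> red_E V E"
  shows "u \<in> V" "v \<in> V"
  using assms red_E_subset simple_graph_edgeD[OF simple] by blast+

lemma induced_S3_claw:
  assumes "induced_S3 E x1 x2 x3 y1 y2 y3"
  obtains px py where "claw (Q x1) (Q x2) (Q x3) px py"
proof -
  note V = induced_S3_in_V[OF assms]
  have "S3_pattern (Q x1) (Q x2) (Q x3) (Q y1) (Q y2) (Q y3)"
    using assms V unfolding S3_pattern_def induced_S3_def by (simp add: overlap_iff_edge)
  then show thesis using S3_pattern_claw wf V that by blast
qed

lemma red_triangle_induced_S3:
  assumes "{a, b} \<in> red_E V E" "{b, c} \<in> red_E V E" "{c, a} \<in> red_E V E"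
  obtains o1 o2 o3 where "induced_S3 E a b c o1 o2 o3"
proof -
  obtain o1 where "o1 \<noteq> c" "{o1, a} \<in> E" "{o1, b} \<in> E" using red_E_common_neighbour[OF assms(1)] .
  moreover obtain o2 where "o2 \<noteq> a" "{o2, b} \<in> E" "{o2, c} \<in> E" using red_E_common_neighbour[OF assms(2)] .
  moreover obtain o3 where "o3 \<noteq> b" "{o3, c} \<in> E" "{o3, a} \<in> E" using red_E_common_neighbour[OF assms(3)] .
  ultimately show thesis
    using that outerplanar_induced_S3_of_triangle[OF simple outerplanar] assms red_E_subset by blast
qed

text \<open>Since a path bends only once, this pins down where
  the path of \<open>s\<close> bends.\<close>

definition bent_claw :: "'a \<Rightarrow> 'a set \<Rightarrow> bool" where
  "bent_claw s F \<longleftrightarrow> (\<exists>u1 u2 y1 y2 y3 px py. induced_S3 E s u1 u2 y1 y2 y3 \<and>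
     claw (Q s) (Q u1) (Q u2) px py \<and> bent_at (Q s) px py \<and> u1 \<in> F \<and> u2 \<in> F)"

lemma bent_clawI:
  "induced_S3 E s u1 u2 y1 y2 y3 \<Longrightarrow> claw (Q s) (Q u1) (Q u2) px py \<Longrightarrow> bent_at (Q s) px py \<Longrightarrow>
   {u1, u2} \<subseteq> F \<Longrightarrow> bent_claw s F"
  unfolding bent_claw_def by blast

lemma bent_claw_mono: "bent_claw s F \<Longrightarrow> F \<subseteq> F' \<Longrightarrow> bent_claw s F'"
  unfolding bent_claw_def by blast

lemma S3_claws_apart:
  assumes S3: "induced_S3 E s u1 u2 y1 y2 y3" "induced_S3 E s w1 w2 z1 z2 z3"
    and disj: "{w1, w2} \<inter> {u1, u2} = {}"
    and claw: "claw (Q s) (Q u1) (Q u2) px py" "claw (Q s) (Q w1) (Q w2) px py"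
  shows False
proof -
  note V = induced_S3_in_V[OF S3(1)] induced_S3_in_V[OF S3(2)]
  have "(overlap (Q u1) (Q w1) \<and> overlap (Q u2) (Q w2)) \<or> (overlap (Q u1) (Q w2) \<and> overlap (Q u2) (Q w1))"
    using claws_at_common_point wf V claw by blast
  then have "({u1, w1} \<in> E \<and> {u2, w2} \<in> E) \<or> ({u1, w2} \<in> E \<and> {u2, w1} \<in> E)"
    using overlap_iff_edge V disj by auto
  moreover have "{s, w1} \<in> E" "{s, w2} \<in> E" "{w1, w2} \<in> E" "{w2, w1} \<in> E"
    using S3(2) unfolding induced_S3_def by (auto simp: insert_commute)
  ultimately show False
    using outerplanar_S3_no_matched_triangle[OF simple outerplanar S3(1)] disj by blast
qed

lemma bent_claws_disjoint:
  assumes "bent_claw s F" "bent_claw s F'" "F \<inter> F' = {}"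
  shows False
proof -
  obtain u1 u2 y1 y2 y3 px py where u: "induced_S3 E s u1 u2 y1 y2 y3" "claw (Q s) (Q u1) (Q u2) px py"
      "bent_at (Q s) px py" "u1 \<in> F" "u2 \<in> F"
    using assms(1) unfolding bent_claw_def by blast
  obtain w1 w2 z1 z2 z3 qx qy where w: "induced_S3 E s w1 w2 z1 z2 z3" "claw (Q s) (Q w1) (Q w2) qx qy"
      "bent_at (Q s) qx qy" "w1 \<in> F'" "w2 \<in> F'"
    using assms(2) unfolding bent_claw_def by blast
  have "qx = px \<and> qy = py" using bent_at_unique[OF w(3) u(3)] .
  then show False using S3_claws_apart[OF u(1) w(1) _ u(2)] w(2) u(4,5) w(4,5) assms(3) by auto
qed

text \<open>The bend of \<open>s\<close> is used up by the claw with \<open>F\<close>, so the claw of a fresh triangle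
  \<open>s m t\<close> lies on a straight part of the path of \<open>s\<close>, and there \<open>t\<close> has to bend.\<close>

lemma bent_claw_propagate:
  assumes "bent_claw s F"
    and red: "{s, m} \<in> red_E V E" "{m, t} \<in> red_E V E" "{t, s} \<in> red_E V E"
    and fresh: "m \<notin> F" "t \<notin> F"
  shows "bent_claw t {s, m}"
proof -
  obtain u1 u2 y1 y2 y3 qx qy where u: "induced_S3 E s u1 u2 y1 y2 y3" "claw (Q s) (Q u1) (Q u2) qx qy"
      "bent_at (Q s) qx qy" "u1 \<in> F" "u2 \<in> F"
    using assms(1) unfolding bent_claw_def by blast
  obtain o1 o2 o3 where T: "induced_S3 E s m t o1 o2 o3" using red_triangle_induced_S3[OF red] .
  obtain px py where claw: "claw (Q s) (Q m) (Q t) px py" using induced_S3_claw[OF T] .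
  have "\<not> (px = qx \<and> py = qy)"
    using S3_claws_apart[OF u(1) T _ u(2)] claw u(4,5) fresh by auto
  then have "\<not> bent_at (Q s) px py" using bent_at_unique[OF u(3)] by blast
  then have "bent_at (Q t) px py" using claw_straight_centre(2)[OF claw] by blast
  then show ?thesis
    using bent_clawI[OF induced_S3_rotate[OF induced_S3_rotate[OF T]] claw_rotate[OF claw]] by simp
qed

lemma red_triangle_claw:
  assumes "{a, b} \<in> red_E V E" "{b, c} \<in> red_E V E" "{c, a} \<in> red_E V E"
  obtains o1 o2 o3 px py where "induced_S3 E a b c o1 o2 o3" "claw (Q a) (Q b) (Q c) px py"
  using red_triangle_induced_S3[OF assms] induced_S3_claw by metis

lemma red_diamond_apart:
  assumes "{a, b} \<in> red_E V E" "{b, c} \<in> red_E V E" "{c, d} \<in> red_E V E" "{d, a} \<in> red_E V E"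
    and "{a, c} \<in> red_E V E" and "distinct [a, b, c, d]"
  shows "\<not> overlap (Q b) (Q d)"
proof
  have E: "{a, b} \<in> E" "{b, c} \<in> E" "{c, d} \<in> E" "{d, a} \<in> E" "{a, c} \<in> E"
    using assms(1-5) red_E_subset by blast+
  have V: "{a, b, c, d} \<subseteq> V" using red_E_in_V assms(1-4) by blast
  assume "overlap (Q b) (Q d)"
  then have "{b, d} \<in> E" using overlap_iff_edge V assms(6) by auto
  then show False
    using outerplanar_no_K4[OF outerplanar V assms(6)] E by (simp add: insert_commute)
qed

lemma diamond_bent_claw:
  assumes red: "{a1, a2} \<in> red_E V E" "{a2, a3} \<in> red_E V E" "{a3, a4} \<in> red_E V E" "{a4, a1} \<in> red_E V E"
    and chord: "{a1, a3} \<in> red_E V E \<or> {a2, a4} \<in> red_E V E"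
    and dist: "distinct [a1, a2, a3, a4]"
  shows "bent_claw a1 {a2, a3, a4}"
proof -
  have wf: "wf_bpath (Q a1)" "wf_bpath (Q a2)" "wf_bpath (Q a3)" "wf_bpath (Q a4)"
    using wf red_E_in_V red by blast+
  from chord show ?thesis
  proof
    assume chord13: "{a1, a3} \<in> red_E V E"
    then have "{a3, a1} \<in> red_E V E" by (simp add: insert_commute)
    then obtain o1 o2 o3 q1x q1y p1 p2 p3 q2x q2y where
      T: "induced_S3 E a1 a2 a3 o1 o2 o3" "induced_S3 E a1 a3 a4 p1 p2 p3"
      and claw: "claw (Q a1) (Q a2) (Q a3) q1x q1y" "claw (Q a1) (Q a3) (Q a4) q2x q2y"
      using red_triangle_claw[OF red(1,2)] red_triangle_claw[OF chord13 red(3,4)] by metis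
    have "bent_at (Q a1) q1x q1y \<or> bent_at (Q a1) q2x q2y"
      using claws_on_chord_bent[OF wf claw red_diamond_apart[OF red chord13 dist]] .
    then show ?thesis
      using bent_clawI[OF T(1) claw(1)] bent_clawI[OF T(2) claw(2)] by auto
  next
    assume chord24: "{a2, a4} \<in> red_E V E"
    then have "{a4, a2} \<in> red_E V E" by (simp add: insert_commute)
    then obtain o1 o2 o3 q1x q1y p1 p2 p3 q2x q2y where
      T: "induced_S3 E a1 a2 a4 o1 o2 o3" "induced_S3 E a2 a3 a4 p1 p2 p3"
      and claw: "claw (Q a1) (Q a2) (Q a4) q1x q1y" "claw (Q a2) (Q a3) (Q a4) q2x q2y"
      using red_triangle_claw[OF red(1) chord24 red(4)] red_triangle_claw[OF red(2,3)] by metis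
    have "distinct [a2, a3, a4, a1]" using dist by auto
    then have "\<not> overlap (Q a1) (Q a3)"
      using red_diamond_apart[OF red(2-4) red(1) chord24] overlap_commute by blast
    then have "bent_at (Q a1) q1x q1y" by (rule claws_off_chord_bent[OF wf(2,4) claw])
    then show ?thesis using bent_clawI[OF T(1) claw(1)] by auto
  qed
qed

lemma bent_claw_chain:
  fixes c :: "nat \<Rightarrow> 'a" and n :: nat
  assumes chain: "\<And>k. k < n \<Longrightarrow> {c (2*k), c (2*k+1)} \<in> red_E V E \<and> {c (2*k+1), c (2*k+2)} \<in> red_E V E \<and>
                                 {c (2*k+2), c (2*k)} \<in> red_E V E"
    and inj: "inj_on c {..2*n}" and fresh: "c ` {1..2*n} \<inter> F = {}"
    and start: "bent_claw (c 0) F"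
  shows "bent_claw (c (2*n)) (F \<union> c ` {..<2*n})"
  using assms
proof (induction n)
  case 0
  then show ?case by (simp add: bent_claw_mono)
next
  case (Suc n)
  have IH: "bent_claw (c (2*n)) (F \<union> c ` {..<2*n})"
  proof (rule Suc.IH)
    show "inj_on c {..2*n}" using Suc.prems(2) by (rule inj_on_subset) auto
    show "c ` {1..2*n} \<inter> F = {}" using Suc.prems(3) by (auto simp: disjoint_iff)
  qed (use Suc.prems(1,4) in auto)
  have sub: "{..<2*n} \<subseteq> {..2 * Suc n}" "{2*n+1, 2*n+2} \<subseteq> {1..2 * Suc n}" by auto
  have "c (2*n+1) \<notin> c ` {..<2*n}" "c (2*n+2) \<notin> c ` {..<2*n}"
    using inj_on_image_mem_iff[OF Suc.prems(2) _ sub(1)] by simp_all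
  moreover have "c (2*n+1) \<notin> F" "c (2*n+2) \<notin> F" using Suc.prems(3) sub(2) by blast+
  ultimately have "bent_claw (c (2*n+2)) {c (2*n), c (2*n+1)}"
    using bent_claw_propagate[OF IH] Suc.prems(1)[of n] by simp
  then have "bent_claw (c (2*n+2)) (F \<union> c ` {..<2*n+2})" by (rule bent_claw_mono) auto
  then show ?case by simp
qed

text \<open>\<open>M\<^sub>1\<close> is a fan of three triangles at \<open>d\<^sub>2\<close>.  Of the three claws at the path of \<open>d\<^sub>2\<close>,
  the middle one is a bend of both \<open>d\<^sub>3\<close> and \<open>d\<^sub>4\<close>, hence not of \<open>d\<^sub>2\<close>; so \<open>d\<^sub>2\<close> bends at both
  outer claws.\<close>

lemma no_red_fan:
  assumes red: "{d1, d2} \<in> red_E V E" "{d1, d3} \<in> red_E V E" "{d2, d3} \<in> red_E V E"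
    "{d3, d4} \<in> red_E V E" "{d2, d4} \<in> red_E V E" "{d4, d5} \<in> red_E V E" "{d2, d5} \<in> red_E V E"
    and dist: "distinct [d1, d2, d3, d4, d5]"
  shows False
proof -
  have red': "{d2, d1} \<in> red_E V E" "{d3, d1} \<in> red_E V E" "{d4, d2} \<in> red_E V E" "{d5, d2} \<in> red_E V E"
    "{d4, d3} \<in> red_E V E" "{d3, d2} \<in> red_E V E"
    using red by (simp_all add: insert_commute)
  have wf: "wf_bpath (Q d1)" "wf_bpath (Q d2)" "wf_bpath (Q d3)" "wf_bpath (Q d4)" "wf_bpath (Q d5)"
    using wf red_E_in_V red by blast+
  obtain o1 o2 o3 q1x q1y where T1: "induced_S3 E d2 d1 d3 o1 o2 o3"
    and c1: "claw (Q d2) (Q d1) (Q d3) q1x q1y"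
    using red_triangle_claw[OF red'(1) red(2) red'(6)] .
  obtain p1 p2 p3 q2x q2y where c2: "claw (Q d2) (Q d3) (Q d4) q2x q2y"
    using red_triangle_claw[OF red(3,4) red'(3)] .
  obtain r1 r2 r3 q3x q3y where T3: "induced_S3 E d2 d4 d5 r1 r2 r3"
    and c3: "claw (Q d2) (Q d4) (Q d5) q3x q3y"
    using red_triangle_claw[OF red(5,6) red'(4)] .
  have apart14: "\<not> overlap (Q d1) (Q d4)"
    using red_diamond_apart[OF red'(1) red(2,4) red'(3) red(3)] dist by auto
  have apart35: "\<not> overlap (Q d3) (Q d5)"
    using red_diamond_apart[OF red(3,4,6) red'(4) red(5)] dist by auto
  have "bent_at (Q d3) q2x q2y"
    using claws_off_chord_bent[OF wf(2,4) claw_swap12[OF c2] claw_swap23[OF c3] apart35] .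
  moreover have "bent_at (Q d4) q2x q2y"
    using claws_off_chord_bent[OF wf(2,3) claw_rotate[OF c2] c1] apart14 overlap_commute by blast
  ultimately have "\<not> bent_at (Q d2) q2x q2y" using claw_not_all_bent[OF wf(2-4) c2] by blast
  moreover have "bent_at (Q d2) q1x q1y \<or> bent_at (Q d2) q2x q2y"
    using claws_on_chord_bent[OF wf(2,1,3,4) c1 c2 apart14] .
  moreover have "bent_at (Q d2) q2x q2y \<or> bent_at (Q d2) q3x q3y"
    using claws_on_chord_bent[OF wf(2-5) c2 c3 apart35] .
  ultimately have "bent_claw d2 {d1, d3}" "bent_claw d2 {d4, d5}"
    using bent_clawI[OF T1 c1] bent_clawI[OF T3 c3] by auto
  then show False by (rule bent_claws_disjoint) (use dist in auto)
qed

lemma no_induced_M1: "\<not> has_induced M1_V M1_E (red_V V E) (red_E V E)"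
proof
  assume "has_induced M1_V M1_E (red_V V E) (red_E V E)"
  then obtain g where g: "induced_emb M1_V M1_E (red_V V E) (red_E V E) g"
    unfolding has_induced_def by blast
  have M1_V: "M1_V = {1, 2, 3, 4, 5}" unfolding M1_V_def by auto
  have "distinct [g 1, g 2, g 3, g 4, g 5]"
    using g unfolding induced_emb_def inj_on_def M1_V by auto
  moreover have "{g 1, g 2} \<in> red_E V E" "{g 1, g 3} \<in> red_E V E" "{g 2, g 3} \<in> red_E V E"
    "{g 3, g 4} \<in> red_E V E" "{g 2, g 4} \<in> red_E V E" "{g 4, g 5} \<in> red_E V E" "{g 2, g 5} \<in> red_E V E"
    using induced_emb_edge[OF g] by (simp_all add: M1_E_def M1_V_def)
  ultimately show False using no_red_fan by blast
qed

lemma no_induced_M1l: "\<not> has_induced (M1l_V l) (M1l_E l ca cb) (red_V V E) (red_E V E)"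
proof
  assume "has_induced (M1l_V l) (M1l_E l ca cb) (red_V V E) (red_E V E)"
  then obtain g where g: "induced_emb (M1l_V l) (M1l_E l ca cb) (red_V V E) (red_E V E) g"
    unfolding has_induced_def by blast
  have red: "{g x, g y} \<in> red_E V E" if "{x, y} \<in> M1l_E l ca cb" "x \<le> 2*l+6" "y \<le> 2*l+6" for x y
    using induced_emb_edge[OF g that(1)] that(2,3) by (simp add: M1l_V_def)
  have inj: "inj_on g {..2*l+6}"
    using g unfolding induced_emb_def M1l_V_def by (simp add: atLeast0AtMost)
  then have g_eq: "g x = g y \<longleftrightarrow> x = y" if "x \<le> 2*l+6" "y \<le> 2*l+6" for x y
    using that by (simp add: inj_on_eq_iff)
  note cyc = M1l_E_cycle_edges[of l ca cb]
  have "bent_claw (g 0) {g (2*l+1), g (2*l+2), g (2*l+3)}"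
    by (rule diamond_bent_claw) (use red cyc in \<open>auto simp: g_eq\<close>)
  then have "bent_claw (g (2*l)) ({g (2*l+1), g (2*l+2), g (2*l+3)} \<union> g ` {..<2*l})"
  proof (intro bent_claw_chain[where c = g])
    show "inj_on g {..2*l}" using inj by (rule inj_on_subset) auto
    show "g ` {1..2*l} \<inter> {g (2*l+1), g (2*l+2), g (2*l+3)} = {}" by (auto simp: g_eq)
  qed (use red M1l_E_chain_edges in auto)
  moreover have "bent_claw (g (2*l)) {g (2*l+4), g (2*l+5), g (2*l+6)}"
    by (rule diamond_bent_claw) (use red cyc in \<open>auto simp: g_eq\<close>)
  moreover have "({g (2*l+1), g (2*l+2), g (2*l+3)} \<union> g ` {..<2*l}) \<inter> {g (2*l+4), g (2*l+5), g (2*l+6)} = {}"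
    by (auto simp: g_eq)
  ultimately show False by (rule bent_claws_disjoint)
qed

end

theorem lemma4p12:
  fixes V :: "'a set" and E :: "'a set set"
  assumes "simple_graph V E"
    and "maximal_outerplanar V E"
    and "has_induced M1_V M1_E (red_V V E) (red_E V E) \<or>
         (\<exists>l ca cb. has_induced (M1l_V l) (M1l_E l ca cb) (red_V V E) (red_E V E))"
  shows "\<not> in_B1 V E"
proof
  assume "in_B1 V E"
  then obtain Q where "\<And>v. v \<in> V \<Longrightarrow> wf_bpath (Q v)"
    and "\<And>u v. u \<in> V \<Longrightarrow> v \<in> V \<Longrightarrow> u \<noteq> v \<Longrightarrow> overlap (Q u) (Q v) \<longleftrightarrow> {u, v} \<in> E"
    using in_B1_bpath_representation by metis
  moreover have "outerplanar V E"
    using assms(2) unfolding maximal_outerplanar_def by blast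
  ultimately interpret outerplanar_B1_rep V E Q
    using assms(1) by unfold_locales
  show False using assms(3) no_induced_M1 no_induced_M1l by blast
qed

end
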